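(* Let $f$ be a probability density supported on $\mathbb{R}_+=[0,\infty)$ that is càdlàg (right-continuous with left limits at every point). Let $\mathcal{M}$ be the class of non-increasing probability densities on $\mathbb{R}_+$ and define $$\pi_0:=\sup\big\{\pi:\exists g\in\mathcal{M}\text{ such that } f-\pi g\ge 0\text{ a.e.}\big\}.$$ Then $$\pi_0=\int_0^\infty h_0(x)\,dx,\qquad h_0(x):=\operatorname{ess\,inf}\{f(y): y\le x\}.$$ Moreover, if $\pi_0>0$, the supremum is attained by the density $g_0:=h_0/\pi_0$ and by no other density in $\mathcal{M}$ (densities identified up to a.e. equality).
   Context: For a function $f$ and $x\ge 0$, $\operatorname{ess\,inf}\{f(y):y\le x\}$ denotes the essential infimum of $f$ over $[0,x]$ with respect to Lebesgue measure, i.e. the supremum of $t$ such that $\{y\in[0,x]: f(y)<t\}$ has Lebesgue measure zero. Densities are understood up to Lebesgue-null sets. *)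

theory Defs
  imports "HOL-Analysis.Analysis"
begin

text \<open>Essential infimum of f over [0,x] w.r.t. Lebesgue measure:
  the supremum of all t such that {y in [0,x]. f y < t} is Lebesgue-null.
  (For x <= 0 the set of such t is unbounded and the value is an irrelevant
  junk constant; only x > 0 matters for integrals and a.e. statements.)\<close>
definition ess_inf_upto :: "(real \<Rightarrow> real) \<Rightarrow> real \<Rightarrow> real" where
  "ess_inf_upto f x = Sup {t. emeasure lborel {y \<in> {0..x}. f y < t} = 0}"

definition prob_density_Rplus :: "(real \<Rightarrow> real) \<Rightarrow> bool" where
  "prob_density_Rplus f \<longleftrightarrow> f \<in> borel_measurable lborel \<and>
     (\<forall>x\<ge>0. 0 \<le> f x) \<and> (\<forall>x<0. f x = 0) \<and>
     set_integrable lborel {0..} f \<and> (LINT x:{0..}|lborel. f x) = 1"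

definition cadlag :: "(real \<Rightarrow> real) \<Rightarrow> bool" where
  "cadlag f \<longleftrightarrow> (\<forall>x. continuous (at_right x) f \<and> (\<exists>l. (f \<longlongrightarrow> l) (at_left x)))"

text \<open>The class M: non-increasing probability densities on [0,oo)
  (as functions determined up to null sets; the value at 0 and on the
  negative half-line is irrelevant).\<close>
definition noninc_density :: "(real \<Rightarrow> real) \<Rightarrow> bool" where
  "noninc_density g \<longleftrightarrow> g \<in> borel_measurable lborel \<and>
     (\<forall>x>0. 0 \<le> g x) \<and> (\<forall>x y. 0 < x \<longrightarrow> x \<le> y \<longrightarrow> g y \<le> g x) \<and>
     set_integrable lborel {0<..} g \<and> (LINT x:{0<..}|lborel. g x) = 1"

definition dominated :: "(real \<Rightarrow> real) \<Rightarrow> real \<Rightarrow> (real \<Rightarrow> real) \<Rightarrow> bool" where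
  "dominated f p g \<longleftrightarrow> (AE x in lborel. 0 \<le> x \<longrightarrow> 0 \<le> f x - p * g x)"

definition pi0 :: "(real \<Rightarrow> real) \<Rightarrow> real" where
  "pi0 f = Sup {p. \<exists>g. noninc_density g \<and> dominated f p g}"

end

theory Submission
  imports Defs
begin

text \<open>Write \<open>h x\<close> for the essential infimum of \<open>f\<close> over \<open>[0, x]\<close>. Right-continuity makes it a true
  infimum over \<open>[0, x)\<close>: a point \<open>y\<close> with \<open>f y < t\<close> yields a whole interval \<open>[y, y + \<delta>)\<close> on
  which \<open>f < t\<close>. Hence \<open>h\<close> is non-increasing, and \<open>h \<le> f\<close> off the countable set where \<open>f\<close>
  jumps below \<open>h\<close>. If \<open>g\<close> is non-increasing and \<open>\<pi> g \<le> f\<close> a.e., the same interval argument gives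
  \<open>\<pi> g x \<le> f y\<close> for all \<open>y < x\<close>, i.e. \<open>\<pi> g \<le> h\<close>; integrating yields \<open>\<pi> \<le> \<integral>h\<close>, while \<open>h / \<integral>h\<close> is
  admissible itself. Equality of the integrals together with \<open>\<pi>\<^sub>0 g \<le> h\<close> forces \<open>\<pi>\<^sub>0 g = h\<close> a.e.\<close>

lemma eventually_less_at_right_interval:
  fixes f :: "real \<Rightarrow> real"
  assumes "continuous (at_right y) f" "f y < t"
  obtains d where "d > 0" "\<And>z. y \<le> z \<Longrightarrow> z < y + d \<Longrightarrow> f z < t"
proof -
  have "(f \<longlongrightarrow> f y) (at_right y)"
    using assms(1) by (simp add: continuous_within)
  hence "eventually (\<lambda>z. f z < t) (at_right y)"
    using assms(2) order_tendstoD(2) by blast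
  then obtain b where "b > y" "\<And>z. y < z \<Longrightarrow> z < b \<Longrightarrow> f z < t"
    unfolding eventually_at_right_field by blast
  with assms(2) show ?thesis
    by (intro that[of "b - y"]) (auto simp: order_le_less)
qed

lemma AE_lborel_obtain_in_interval:
  assumes "AE x in lborel. P x" "a < (b::real)"
  obtains z where "a < z" "z < b" "P z"
proof -
  obtain N where N: "{x \<in> space lborel. \<not> P x} \<subseteq> N" "emeasure lborel N = 0" "N \<in> sets lborel"
    using assms(1) by (rule AE_E)
  have "\<not> {a<..<b} \<subseteq> N"
  proof
    assume "{a<..<b} \<subseteq> N"
    hence "emeasure lborel {a<..<b} \<le> emeasure lborel N"
      using N(3) by (rule emeasure_mono)
    thus False
      using N(2) assms(2) by simp
  qed
  then obtain z where "z \<in> {a<..<b}" "z \<notin> N"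
    by blast
  with N(1) show ?thesis
    using that by auto
qed

lemma ess_inf_upto_nonpos:
  assumes "x \<le> 0"
  shows "ess_inf_upto f x = Sup (UNIV :: real set)"
proof -
  have "emeasure lborel {y \<in> {0..x}. f y < t} = 0" for t
  proof -
    have "emeasure lborel {y \<in> {0..x}. f y < t} \<le> emeasure lborel {0 :: real}"
      by (rule emeasure_mono) (use assms in auto)
    thus ?thesis by simp
  qed
  thus ?thesis
    unfolding ess_inf_upto_def by simp
qed

lemma borel_measurable_antimono_on_pos:
  fixes h :: "real \<Rightarrow> real"
  assumes "\<And>x y. 0 < x \<Longrightarrow> x \<le> y \<Longrightarrow> h y \<le> h x" "\<And>x. 0 < x \<Longrightarrow> h x \<le> B"
    and "\<And>x. x \<le> 0 \<Longrightarrow> h x = c"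
  shows "h \<in> borel_measurable borel"
proof -
  define \<phi> where "\<phi> x = (if 0 < x then - h x else - B)" for x
  have "mono \<phi>"
    by (rule monoI) (use assms(1,2) in \<open>force simp: \<phi>_def\<close>)
  hence [measurable]: "\<phi> \<in> borel_measurable borel"
    by (rule borel_measurable_mono)
  have "h = (\<lambda>x. if 0 < x then - \<phi> x else c)"
    using assms(3) by (auto simp: \<phi>_def fun_eq_iff)
  also have "\<dots> \<in> borel_measurable borel"
    by measurable
  finally show ?thesis .
qed

lemma noninc_density_indicator_unit_interval: "noninc_density (indicator {0<..1 :: real})"
proof -
  have "(\<lambda>x::real. indicator {0<..} x *\<^sub>R (indicator {0<..1} x :: real)) = indicator {0<..1}"
    by (auto simp: fun_eq_iff split: split_indicator)
  moreover have "integrable lborel (indicator {0<..1 :: real} :: real \<Rightarrow> real)"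
    by (rule integrable_real_indicator) auto
  ultimately show ?thesis
    unfolding noninc_density_def set_integrable_def set_lebesgue_integral_def
    by (auto split: split_indicator)
qed

locale right_continuous_nonneg =
  fixes f :: "real \<Rightarrow> real"
  assumes measurable_f[measurable]: "f \<in> borel_measurable lborel"
    and nonneg: "\<And>x. 0 \<le> x \<Longrightarrow> 0 \<le> f x"
    and right_continuous: "\<And>x. continuous (at_right x) f"
begin

abbreviation h :: "real \<Rightarrow> real" where
  "h \<equiv> ess_inf_upto f"

lemma emeasure_sublevel_eq_0_iff:
  assumes "x > 0"
  shows "emeasure lborel {y \<in> {0..x}. f y < t} = 0 \<longleftrightarrow> (\<forall>y\<in>{0..<x}. t \<le> f y)"
proof
  assume "\<forall>y\<in>{0..<x}. t \<le> f y"
  hence "{y \<in> {0..x}. f y < t} \<subseteq> {x}"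
    by force
  hence "emeasure lborel {y \<in> {0..x}. f y < t} \<le> emeasure lborel {x}"
    by (rule emeasure_mono) simp
  thus "emeasure lborel {y \<in> {0..x}. f y < t} = 0"
    by simp
next
  assume null: "emeasure lborel {y \<in> {0..x}. f y < t} = 0"
  show "\<forall>y\<in>{0..<x}. t \<le> f y"
  proof (rule ccontr)
    assume "\<not> ?thesis"
    then obtain y where y: "y \<in> {0..<x}" "f y < t"
      by force
    obtain d where "d > 0" "\<And>z. y \<le> z \<Longrightarrow> z < y + d \<Longrightarrow> f z < t"
      using eventually_less_at_right_interval[OF right_continuous y(2)] by blast
    moreover have "AE z in lborel. z \<notin> {y \<in> {0..x}. f y < t}"
      by (rule AE_not_in) (use null in \<open>auto intro: null_setsI\<close>)
    ultimately show False
      using y by (elim AE_lborel_obtain_in_interval[where a = y and b = "min (y + d) x"]) auto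
  qed
qed

lemma h_eq_Sup_lower_bounds: "x > 0 \<Longrightarrow> h x = Sup {t. \<forall>y\<in>{0..<x}. t \<le> f y}"
  unfolding ess_inf_upto_def using emeasure_sublevel_eq_0_iff by simp

lemma h_le: "x > 0 \<Longrightarrow> y \<in> {0..<x} \<Longrightarrow> h x \<le> f y"
  unfolding h_eq_Sup_lower_bounds by (rule cSup_least) (use nonneg in force)+

lemma h_greatest: "x > 0 \<Longrightarrow> (\<And>y. y \<in> {0..<x} \<Longrightarrow> t \<le> f y) \<Longrightarrow> t \<le> h x"
  unfolding h_eq_Sup_lower_bounds
  by (rule cSup_upper) (auto simp: bdd_above_def intro!: exI[of _ "f 0"])

lemma h_nonneg: "x > 0 \<Longrightarrow> 0 \<le> h x"
  by (rule h_greatest) (use nonneg in auto)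

lemma h_antimono: "0 < x \<Longrightarrow> x \<le> x' \<Longrightarrow> h x' \<le> h x"
  by (rule h_greatest) (auto intro!: h_le)

lemma borel_measurable_h[measurable]: "h \<in> borel_measurable lborel"
proof -
  have "h \<in> borel_measurable borel"
    by (rule borel_measurable_antimono_on_pos[where B = "f 0"]) (auto intro: h_antimono h_le ess_inf_upto_nonpos)
  thus ?thesis by simp
qed

text \<open>Distinct points of \<open>{x > 0. f x < h x}\<close> are separated by rationals strictly between \<open>f\<close> and \<open>h\<close>.\<close>
lemma countable_f_less_h: "countable {x. 0 < x \<and> f x < h x}"
proof -
  define J where "J = {x. 0 < x \<and> f x < h x}"
  define q where "q x = (SOME r. r \<in> \<rat> \<and> f x < r \<and> r < h x)" for x
  have q: "q x \<in> \<rat> \<and> f x < q x \<and> q x < h x" if "x \<in> J" for x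
    unfolding q_def
    by (rule someI_ex) (use Rats_dense_in_real that in \<open>auto simp: J_def\<close>)
  have q_less: "q x' < q x" if "x \<in> J" "x' \<in> J" "x < x'" for x x'
    using h_le[of x' x] q[OF that(1)] q[OF that(2)] that by (auto simp: J_def)
  have "inj_on q J"
    by (rule inj_onI) (metis q_less less_irrefl linorder_cases)
  moreover have "countable (q ` J)"
    by (rule countable_subset[OF _ countable_rat]) (use q in blast)
  ultimately show ?thesis
    unfolding J_def[symmetric] using countable_image_inj_on by blast
qed

lemma AE_h_le_f: "AE x in lborel. 0 < x \<longrightarrow> h x \<le> f x"
  using AE_not_in[OF countable_imp_null_set_lborel[OF countable_f_less_h]]
  by eventually_elim auto

lemma dominated_imp_le_h:
  assumes g: "noninc_density g" and "dominated f p g" "0 \<le> p" "x > 0"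
  shows "p * g x \<le> h x"
proof (rule h_greatest[OF \<open>x > 0\<close>], rule ccontr)
  fix y assume y: "y \<in> {0..<x}" "\<not> p * g x \<le> f y"
  obtain e where e: "e > 0" "\<And>z. y \<le> z \<Longrightarrow> z < y + e \<Longrightarrow> f z < p * g x"
    using eventually_less_at_right_interval[OF right_continuous, of y "p * g x"] y by auto
  obtain z where z: "y < z" "z < min (y + e) x" "0 \<le> z \<longrightarrow> p * g z \<le> f z"
    using \<open>dominated f p g\<close> e y unfolding dominated_def
    by (elim AE_lborel_obtain_in_interval[where a = y and b = "min (y + e) x"]) auto
  have "f z < p * g x"
    using e(2) z by auto
  also have "\<dots> \<le> p * g z"
    using g z y \<open>0 \<le> p\<close> unfolding noninc_density_def by (auto intro: mult_left_mono)
  finally show False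
    using z y by auto
qed

end

locale right_continuous_integrable = right_continuous_nonneg +
  assumes set_integrable_f: "set_integrable lborel {0..} f"
begin

lemma set_integrable_h: "set_integrable lborel {0..} h"
  unfolding set_integrable_def
proof (rule Bochner_Integration.integrable_bound)
  show "integrable lborel (\<lambda>x. indicator {0..} x *\<^sub>R f x)"
    using set_integrable_f unfolding set_integrable_def .
  show "AE x in lborel. norm (indicator {0..} x *\<^sub>R h x) \<le> norm (indicator {0..} x *\<^sub>R f x)"
    using AE_h_le_f AE_lborel_singleton[of "0 :: real"]
    by eventually_elim (use h_nonneg nonneg in \<open>auto simp: indicator_def\<close>)
qed measurable

lemma set_integrable_h_pos: "set_integrable lborel {0<..} h"
  by (rule set_integrable_subset[OF set_integrable_h]) auto

lemma integral_h_pos_eq: "(LINT x:{0<..}|lborel. h x) = (LINT x:{0..}|lborel. h x)"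
  using AE_lborel_singleton[of "0 :: real"]
  by (intro set_integral_cong_set) (auto simp: set_borel_measurable_def elim: eventually_mono)

lemma integral_h_nonneg: "0 \<le> (LINT x:{0<..}|lborel. h x)"
  unfolding set_lebesgue_integral_def
  by (rule Bochner_Integration.integral_nonneg) (use h_nonneg in \<open>auto simp: indicator_def\<close>)

lemma dominated_imp_le_integral_h:
  assumes "noninc_density g" "dominated f p g"
  shows "p \<le> (LINT x:{0<..}|lborel. h x)"
proof (cases "p \<le> 0")
  case True
  thus ?thesis using integral_h_nonneg by linarith
next
  case False
  have "set_integrable lborel {0<..} g" "(LINT x:{0<..}|lborel. g x) = 1"
    using assms(1) unfolding noninc_density_def by auto
  hence "p = (LINT x:{0<..}|lborel. p * g x)"
    by simp
  also have "\<dots> \<le> (LINT x:{0<..}|lborel. h x)"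
    using \<open>set_integrable lborel {0<..} g\<close> set_integrable_h_pos dominated_imp_le_h[OF assms] False
    by (intro set_integral_mono) auto
  finally show ?thesis .
qed

context
  fixes c assumes c_eq: "c = (LINT x:{0<..}|lborel. h x)" and c_pos: "c > 0"
begin

lemma noninc_density_normalized_h: "noninc_density (\<lambda>x. h x / c)"
  unfolding noninc_density_def
proof (intro conjI allI impI)
  show "0 \<le> h x / c" if "0 < x" for x
    using h_nonneg[OF that] c_pos by simp
  show "h y / c \<le> h x / c" if "0 < x" "x \<le> y" for x y
    using h_antimono[OF that] c_pos by (simp add: divide_right_mono)
  show "set_integrable lborel {0<..} (\<lambda>x. h x / c)"
    using set_integrable_h_pos by auto
  show "(LINT x:{0<..}|lborel. h x / c) = 1"
    using c_eq c_pos by simp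
qed measurable

lemma dominated_normalized_h: "dominated f c (\<lambda>x. h x / c)"
  unfolding dominated_def using AE_h_le_f AE_lborel_singleton[of "0 :: real"]
  by eventually_elim (use c_pos in auto)

text \<open>Both \<open>c g\<close> and \<open>h\<close> have integral \<open>c\<close> over \<open>(0, \<infinity>)\<close>, and \<open>c g \<le> h\<close> there.\<close>
lemma dominated_imp_AE_eq_normalized_h:
  assumes g: "noninc_density g" "dominated f c g"
  shows "AE x in lborel. 0 \<le> x \<longrightarrow> g x = h x / c"
proof -
  have gi: "set_integrable lborel {0<..} g" "(LINT x:{0<..}|lborel. g x) = 1"
    using g(1) unfolding noninc_density_def by auto
  have diff: "set_integrable lborel {0<..} (\<lambda>x. h x - c * g x)"
    using set_integrable_h_pos gi by auto
  have "(LINT x:{0<..}|lborel. h x - c * g x) = 0"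
    using set_integrable_h_pos gi c_eq by simp
  hence "AE x in lborel. indicator {0<..} x *\<^sub>R (h x - c * g x) = 0"
    using diff dominated_imp_le_h[OF g] c_pos
    unfolding set_integrable_def set_lebesgue_integral_def
    by (subst (asm) integral_nonneg_eq_0_iff_AE) (auto simp: indicator_def)
  thus ?thesis
    using AE_lborel_singleton[of "0 :: real"]
    by eventually_elim (use c_pos in \<open>auto simp: indicator_def field_simps\<close>)
qed

end

text \<open>If \<open>\<integral>h = 0\<close>, the value \<open>0\<close> is attained by any density, e.g. the uniform one on \<open>(0, 1]\<close>.\<close>
lemma pi0_eq_integral_h: "pi0 f = (LINT x:{0<..}|lborel. h x)"
  unfolding pi0_def
proof (rule cSup_eq_maximum)
  let ?c = "LINT x:{0<..}|lborel. h x"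
  have "dominated f 0 (indicator {0<..1})"
    unfolding dominated_def using nonneg by auto
  with noninc_density_indicator_unit_interval
    noninc_density_normalized_h[OF refl] dominated_normalized_h[OF refl] integral_h_nonneg
  show "?c \<in> {p. \<exists>g. noninc_density g \<and> dominated f p g}"
    by (cases "?c > 0") force+
qed (use dominated_imp_le_integral_h in blast)

end

theorem mainTheorem4:
  fixes f :: "real \<Rightarrow> real"
  assumes "prob_density_Rplus f" and "cadlag f"
  shows "set_integrable lborel {0..} (ess_inf_upto f)
       \<and> pi0 f = (LINT x:{0..}|lborel. ess_inf_upto f x)
       \<and> (pi0 f > 0 \<longrightarrow>
            noninc_density (\<lambda>x. ess_inf_upto f x / pi0 f)
          \<and> dominated f (pi0 f) (\<lambda>x. ess_inf_upto f x / pi0 f)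
          \<and> (\<forall>g. noninc_density g \<and> dominated f (pi0 f) g \<longrightarrow>
                 (AE x in lborel. 0 \<le> x \<longrightarrow> g x = ess_inf_upto f x / pi0 f)))"
proof -
  interpret right_continuous_integrable f
    using assms unfolding prob_density_Rplus_def cadlag_def by unfold_locales auto
  show ?thesis
    using set_integrable_h pi0_eq_integral_h integral_h_pos_eq
      noninc_density_normalized_h dominated_normalized_h dominated_imp_AE_eq_normalized_h
    by auto
qed

end
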